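(* Let $\mu$ be a centered log-concave probability measure on $\mathbb{R}^n$ with density $f$. Let $A\subset\mathbb{R}^n$ be a convex body and let $x_A+r_AB_2^n\subseteq A$ be an inball of $A$ (a Euclidean ball of maximal radius $r_A$ contained in $A$, with center $x_A$). Then $$\mu^+(\partial A)\leq \frac{n+\ln\big(\|f|_A\|_\infty/f(x_A)\big)}{r_A}\,\mu(A),$$ where $\|f|_A\|_\infty=\sup_{x\in A}f(x)$ (the right-hand side being interpreted as $+\infty$ if $f(x_A)=0$).
   Context: A probability measure on $\mathbb{R}^n$ is log-concave (full-dimensional) if it has a density $f$ with $\ln f$ concave; centered means its barycenter is $0$. A convex body is a compact convex set with nonempty interior; $B_2^n$ is the Euclidean unit ball. $\mu^+(\partial A)=\liminf_{\epsilon\to0^+}\frac{\mu((A+\epsilon B_2^n)\setminus A)}{\epsilon}$. The inradius $r_A$ of $A$ is the supremum of $r>0$ such that $x+rB_2^n\subseteq A$ for some $x\in A$ (it is attained). *)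

theory Defs
  imports "HOL-Analysis.Analysis"
begin

text \<open>Log-concavity of a nonnegative function (ln f concave, with ln 0 = -infinity),
  written in its standard multiplicative form.\<close>
definition log_concave :: "('a::euclidean_space \<Rightarrow> real) \<Rightarrow> bool" where
  "log_concave f \<longleftrightarrow> (\<forall>x. 0 \<le> f x) \<and>
     (\<forall>x y t. 0 < t \<and> t < 1 \<longrightarrow>
        f ((1 - t) *\<^sub>R x + t *\<^sub>R y) \<ge> f x powr (1 - t) * f y powr t)"

definition centered_log_concave_density :: "('a::euclidean_space \<Rightarrow> real) \<Rightarrow> bool" where
  "centered_log_concave_density f \<longleftrightarrow>
     log_concave f \<and> f \<in> borel_measurable lborel \<and>
     integrable lborel f \<and> (\<integral>x. f x \<partial>lborel) = 1 \<and>
     integrable lborel (\<lambda>x. f x *\<^sub>R x) \<and> (\<integral>x. f x *\<^sub>R x \<partial>lborel) = 0"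

definition convex_body :: "'a::euclidean_space set \<Rightarrow> bool" where
  "convex_body A \<longleftrightarrow> compact A \<and> convex A \<and> interior A \<noteq> {}"

definition enlarge :: "'a::euclidean_space set \<Rightarrow> real \<Rightarrow> 'a set" where
  "enlarge A e = {a + b | a b. a \<in> A \<and> b \<in> cball 0 e}"

definition boundary_measure :: "'a::euclidean_space measure \<Rightarrow> 'a set \<Rightarrow> ereal" where
  "boundary_measure M A =
     Liminf (at_right (0::real)) (\<lambda>e. ereal (measure M (enlarge A e - A) / e))"

definition inradius :: "'a::euclidean_space set \<Rightarrow> real" where
  "inradius A = Sup {r. r > 0 \<and> (\<exists>x\<in>A. cball x r \<subseteq> A)}"

end

theory Submission
  imports Defs
begin

text \<open>Let r be the inradius and c = 1 + e/r. Convexity and the inball give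
  A + e B \<subseteq> xA + c (A - xA). Along each ray from xA, log-concavity gives
  f (xA + c (y - xA)) \<le> f y K^(c - 1) for y \<in> A, where K = sup f(A) / f xA, so the
  change of variables y \<mapsto> xA + c (y - xA) yields \<mu>(A + e B) \<le> c^n K^(c - 1) \<mu>(A).
  Subtracting \<mu>(A), dividing by e and letting e \<rightarrow> 0 leaves the derivative (n + ln K) / r
  of c^n K^(c - 1) at e = 0. The supremum is finite because integrable log-concave
  functions are bounded.\<close>

lemma log_concave_nonneg: "log_concave f \<Longrightarrow> 0 \<le> f x"
  by (simp add: log_concave_def)

lemma log_concaveD:
  assumes "log_concave f" "0 < t" "t < 1"
  shows "f x powr (1 - t) * f y powr t \<le> f ((1 - t) *\<^sub>R x + t *\<^sub>R y)"
  using assms by (simp add: log_concave_def)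

lemma log_concave_midpoint:
  assumes "log_concave f"
  shows "sqrt (f x * f y) \<le> f (midpoint x y)"
proof -
  have "midpoint x y = (1 - 1/2) *\<^sub>R x + (1/2) *\<^sub>R y"
    by (simp add: midpoint_def scaleR_add_right)
  moreover have "f x powr (1 - 1/2) * f y powr (1/2) = sqrt (f x * f y)"
    using log_concave_nonneg[OF assms] by (simp add: powr_half_sqrt real_sqrt_mult)
  ultimately show ?thesis
    using log_concaveD[OF assms, of "1/2" x y] by simp
qed

lemma log_concave_superlevel_convex:
  assumes "log_concave f"
  shows "convex {x. \<delta> \<le> f x}"
proof (cases "\<delta> \<le> 0")
  case True
  then show ?thesis using log_concave_nonneg[OF assms] by (simp add: order_trans[OF True])
next
  case False
  show ?thesis
  proof (rule convexI)
    fix x y and u v :: real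
    assume xy: "x \<in> {x. \<delta> \<le> f x}" "y \<in> {x. \<delta> \<le> f x}" and uv: "0 \<le> u" "0 \<le> v" "u + v = 1"
    show "u *\<^sub>R x + v *\<^sub>R y \<in> {x. \<delta> \<le> f x}"
    proof (cases "v = 0 \<or> v = 1")
      case True
      then show ?thesis using xy uv by auto
    next
      case False
      then have v: "0 < v" "v < 1" and u: "u = 1 - v" using uv by auto
      have "\<delta> = \<delta> powr (1 - v) * \<delta> powr v"
        using \<open>\<not> \<delta> \<le> 0\<close> by (simp add: powr_add[symmetric])
      also have "\<dots> \<le> f x powr (1 - v) * f y powr v"
        using xy v \<open>\<not> \<delta> \<le> 0\<close> by (intro mult_mono powr_mono2) auto
      also have "\<dots> \<le> f (u *\<^sub>R x + v *\<^sub>R y)"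
        using log_concaveD[OF assms v] u by simp
      finally show ?thesis by simp
    qed
  qed
qed

lemma superlevel_set_not_null:
  fixes f :: "'a \<Rightarrow> real"
  assumes [measurable]: "f \<in> borel_measurable M" and "\<And>x. 0 \<le> f x" and "integral\<^sup>L M f \<noteq> 0"
  shows "\<exists>\<delta>>0. {x \<in> space M. \<delta> \<le> f x} \<notin> null_sets M"
proof (rule ccontr)
  assume "\<not> ?thesis"
  then have null: "{x \<in> space M. 1 / Suc k \<le> f x} \<in> null_sets M" for k :: nat
    by simp
  have "{x \<in> space M. f x \<noteq> 0} \<subseteq> (\<Union>k. {x \<in> space M. 1 / Suc k \<le> f x})"
  proof
    fix x assume x: "x \<in> {x \<in> space M. f x \<noteq> 0}"
    then have "0 < f x" using assms(2)[of x] by simp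
    then obtain k where "inverse (real (Suc k)) < f x" using reals_Archimedean by blast
    then show "x \<in> (\<Union>k. {x \<in> space M. 1 / Suc k \<le> f x})"
      using x by (auto simp: inverse_eq_divide intro!: less_imp_le)
  qed
  with null have "AE x in M. f x = 0"
    by (intro AE_I'[of "\<Union>k. {x \<in> space M. 1 / Suc k \<le> f x}"]) auto
  then have "integral\<^sup>L M f = 0" by (rule integral_eq_zero_AE)
  with assms(3) show False by simp
qed

text \<open>Each point of the ball around midpoint c z is the midpoint of z and a point of
  ball c \<rho>, so f is at least sqrt (\<delta> f z) there.\<close>
lemma log_concave_integral_lower_bound:
  fixes f :: "'a::euclidean_space \<Rightarrow> real"
  assumes lc: "log_concave f" and fi: "integrable lborel f"
    and ball: "ball c \<rho> \<subseteq> {x. \<delta> \<le> f x}" and "0 < \<delta>" and "0 < \<rho>"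
  shows "sqrt (\<delta> * f z) * ((\<rho>/2) ^ DIM('a) * measure lborel (ball (0::'a) 1))
    \<le> integral\<^sup>L lborel f"
proof -
  define B where "B = ball (midpoint c z) (\<rho>/2)"
  have above: "sqrt (\<delta> * f z) * indicator B w \<le> f w" for w
  proof (cases "w \<in> B")
    case False
    then show ?thesis using log_concave_nonneg[OF lc] by simp
  next
    case True
    define b where "b = 2 *\<^sub>R w - z"
    have "c - b = 2 *\<^sub>R (midpoint c z - w)"
      by (simp add: b_def midpoint_def scaleR_diff_right scaleR_add_right)
    then have "dist c b < \<rho>"
      using True by (simp add: B_def dist_norm norm_minus_commute)
    then have "\<delta> \<le> f b" using ball by auto
    moreover have "midpoint b z = w"
      by (simp add: b_def midpoint_def scaleR_diff_right)
    ultimately have "sqrt (\<delta> * f z) \<le> f w"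
      using log_concave_midpoint[OF lc, of b z] log_concave_nonneg[OF lc, of z]
      by (metis mult_right_mono real_sqrt_le_mono order_trans)
    then show ?thesis using True by simp
  qed
  have "sqrt (\<delta> * f z) * ((\<rho>/2) ^ DIM('a) * measure lborel (ball (0::'a) 1))
      = (\<integral>w. sqrt (\<delta> * f z) * indicator B w \<partial>lborel)"
    using \<open>0 < \<rho>\<close> by (simp add: B_def content_ball_conv_unit_ball[of "\<rho>/2"])
  also have "\<dots> \<le> integral\<^sup>L lborel f"
    using emeasure_lborel_ball_finite[of "midpoint c z" "\<rho>/2"]
    by (intro integral_mono fi above integrable_mult_right integrable_real_indicator)
      (auto simp: B_def)
  finally show ?thesis .
qed

lemma log_concave_integrable_bounded:
  fixes f :: "'a::euclidean_space \<Rightarrow> real"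
  assumes lc: "log_concave f" and fi: "integrable lborel f" and "integral\<^sup>L lborel f \<noteq> 0"
  shows "\<exists>B. \<forall>x. f x \<le> B"
proof -
  obtain \<delta> where "0 < \<delta>" and "{x. \<delta> \<le> f x} \<notin> null_sets lborel"
    using superlevel_set_not_null[of f lborel] assms log_concave_nonneg[OF lc] by auto
  then have "\<not> negligible {x. \<delta> \<le> f x}"
    using fi by (simp add: negligible_iff_null_sets null_sets_completion_iff)
  then have "interior {x. \<delta> \<le> f x} \<noteq> {}"
    using negligible_convex_interior[OF log_concave_superlevel_convex[OF lc]] by simp
  then obtain c \<rho> where "0 < \<rho>" and ball: "ball c \<rho> \<subseteq> {x. \<delta> \<le> f x}"
    by (meson equals0I mem_interior)
  define V where "V = (\<rho>/2) ^ DIM('a) * measure lborel (ball (0::'a) 1)"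
  have "0 < V" using \<open>0 < \<rho>\<close> by (simp add: V_def content_ball_pos)
  have "f z \<le> (integral\<^sup>L lborel f / V)\<^sup>2 / \<delta>" for z
  proof -
    have "sqrt (\<delta> * f z) \<le> integral\<^sup>L lborel f / V"
      using log_concave_integral_lower_bound[OF lc fi ball \<open>0 < \<delta>\<close> \<open>0 < \<rho>\<close>, of z] \<open>0 < V\<close>
      by (simp add: V_def field_simps)
    then have "\<delta> * f z \<le> (integral\<^sup>L lborel f / V)\<^sup>2"
      by (rule sqrt_le_D)
    then show ?thesis
      using \<open>0 < \<delta>\<close> by (simp add: pos_le_divide_eq mult.commute)
  qed
  then show ?thesis by blast
qed

lemma log_concave_homothety_le:
  fixes f :: "'a::euclidean_space \<Rightarrow> real"
  assumes lc: "log_concave f" and "1 < c" and "0 < f x" and "f y \<le> M"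
  shows "f (x + c *\<^sub>R (y - x)) \<le> f y * (M / f x) powr (c - 1)"
proof -
  define F where "F = f (x + c *\<^sub>R (y - x))"
  have "f x powr (1 - 1/c) * F powr (1/c) \<le> f ((1 - 1/c) *\<^sub>R x + (1/c) *\<^sub>R (x + c *\<^sub>R (y - x)))"
    unfolding F_def by (rule log_concaveD[OF lc]) (use \<open>1 < c\<close> in auto)
  also have "(1 - 1/c) *\<^sub>R x + (1/c) *\<^sub>R (x + c *\<^sub>R (y - x)) = y"
    using \<open>1 < c\<close> by (simp add: algebra_simps)
  finally have ineq: "f x powr (1 - 1/c) * F powr (1/c) \<le> f y" .
  show ?thesis
  proof (cases "F = 0")
    case True
    then show ?thesis using log_concave_nonneg[OF lc, of y] by (simp add: F_def)
  next
    case False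
    then have "0 < F" using log_concave_nonneg[OF lc] by (simp add: F_def order_le_neq_trans)
    have "0 < f y"
      using ineq \<open>0 < F\<close> \<open>0 < f x\<close> by (smt (verit) mult_pos_pos powr_gt_zero)
    have "f x powr (c - 1) * F = (f x powr (1 - 1/c) * F powr (1/c)) powr c"
      using \<open>0 < f x\<close> \<open>0 < F\<close> \<open>1 < c\<close> by (simp add: powr_mult powr_powr left_diff_distrib)
    also have "\<dots> \<le> f y powr c"
      using ineq \<open>1 < c\<close> by (intro powr_mono2) auto
    finally have "F \<le> f y powr c / f x powr (c - 1)"
      using \<open>0 < f x\<close> by (simp add: field_simps)
    also have "\<dots> = f y * (f y / f x) powr (c - 1)"
      using \<open>0 < f y\<close> \<open>0 < f x\<close> by (simp add: powr_divide powr_diff)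
    also have "\<dots> \<le> f y * (M / f x) powr (c - 1)"
      using \<open>0 < f y\<close> \<open>0 < f x\<close> \<open>f y \<le> M\<close> \<open>1 < c\<close>
      by (intro mult_left_mono powr_mono2 divide_right_mono) auto
    finally show ?thesis by (simp add: F_def)
  qed
qed

lemma sets_borel_homothety_image:
  fixes x :: "'a::euclidean_space"
  assumes "c \<noteq> 0" and "A \<in> sets borel"
  shows "(\<lambda>y. x + c *\<^sub>R (y - x)) ` A \<in> sets borel"
proof -
  have "x + inverse c *\<^sub>R (x + c *\<^sub>R (y - x) - x) = y"
    and "x + c *\<^sub>R (x + inverse c *\<^sub>R (y - x) - x) = y" for y
    using assms by simp_all
  then have "(\<lambda>y. x + c *\<^sub>R (y - x)) ` A = (\<lambda>y. x + inverse c *\<^sub>R (y - x)) -` A"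
    by (auto intro: rev_image_eqI simp del: scaleR_scaleR)
  also have "\<dots> \<in> sets borel"
    by (intro measurable_sets_borel[OF _ assms(2)] borel_measurable_continuous_onI continuous_intros)
  finally show ?thesis .
qed

lemma emeasure_density_homothety_le:
  fixes f :: "'a::euclidean_space \<Rightarrow> real"
  assumes [measurable]: "f \<in> borel_measurable borel" and nn: "\<And>x. 0 \<le> f x"
    and [measurable]: "A \<in> sets borel" and "0 < c" and "0 \<le> k"
    and bound: "\<And>y. y \<in> A \<Longrightarrow> f (x + c *\<^sub>R (y - x)) \<le> k * f y"
  shows "emeasure (density lborel f) ((\<lambda>y. x + c *\<^sub>R (y - x)) ` A)
     \<le> ennreal (c ^ DIM('a) * k) * emeasure (density lborel f) A"
proof -
  define T where "T y = x + c *\<^sub>R (y - x)" for y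
  have T_affine: "T = (\<lambda>y. (x - c *\<^sub>R x) + c *\<^sub>R y)"
    by (rule ext) (simp add: T_def scaleR_diff_right)
  have "inj T" unfolding T_affine inj_def using \<open>0 < c\<close> by auto
  have [measurable]: "T ` A \<in> sets borel"
    unfolding T_def[abs_def] using \<open>0 < c\<close> by (intro sets_borel_homothety_image) auto
  have [measurable]: "T \<in> borel_measurable borel" unfolding T_affine by measurable
  have "emeasure (density lborel f) (T ` A) = (\<integral>\<^sup>+y. ennreal (f y) * indicator (T ` A) y \<partial>lborel)"
    by (subst emeasure_density) auto
  also have "\<dots> = (\<integral>\<^sup>+y. ennreal (f y) * indicator (T ` A) y
      \<partial>density (distr lborel borel T) (\<lambda>_. ennreal (c ^ DIM('a))))"
    using lborel_affine[of c "x - c *\<^sub>R x"] \<open>0 < c\<close> by (simp add: T_affine)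
  also have "\<dots> = (\<integral>\<^sup>+y. ennreal (c ^ DIM('a)) * (ennreal (f (T y)) * indicator A y) \<partial>lborel)"
    using \<open>inj T\<close> by (simp add: nn_integral_density nn_integral_distr indicator_def inj_image_mem_iff)
  also have "\<dots> \<le> (\<integral>\<^sup>+y. ennreal (c ^ DIM('a) * k) * (ennreal (f y) * indicator A y) \<partial>lborel)"
  proof (intro nn_integral_mono)
    fix y
    show "ennreal (c ^ DIM('a)) * (ennreal (f (T y)) * indicator A y)
        \<le> ennreal (c ^ DIM('a) * k) * (ennreal (f y) * indicator A y)"
    proof (cases "y \<in> A")
      case True
      have "c ^ DIM('a) * f (T y) \<le> (c ^ DIM('a) * k) * f y"
        using bound[OF True] \<open>0 < c\<close> by (simp add: T_def mult.assoc)
      then have "ennreal (c ^ DIM('a) * f (T y)) \<le> ennreal ((c ^ DIM('a) * k) * f y)"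
        by (rule ennreal_leI)
      then show ?thesis
        using True \<open>0 < c\<close> \<open>0 \<le> k\<close> nn by (simp add: ennreal_mult)
    qed simp
  qed
  also have "\<dots> = ennreal (c ^ DIM('a) * k) * emeasure (density lborel f) A"
    by (subst nn_integral_cmult) (auto simp: emeasure_density)
  finally show ?thesis by (simp add: T_def[abs_def])
qed

lemma enlarge_subset_homothety:
  fixes A :: "'a::euclidean_space set"
  assumes "convex A" and "cball x r \<subseteq> A" and "0 < r" and "0 < e"
  shows "enlarge A e \<subseteq> (\<lambda>y. x + (1 + e/r) *\<^sub>R (y - x)) ` A"
proof
  fix z assume "z \<in> enlarge A e"
  then obtain a b where z: "z = a + b" and "a \<in> A" and "norm b \<le> e"
    by (auto simp: enlarge_def)
  define c where "c = 1 + e/r"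
  have "1 < c" using assms by (simp add: c_def)
  define w where "w = x + (r/e) *\<^sub>R b"
  have "norm ((r/e) *\<^sub>R b) \<le> r"
    using \<open>norm b \<le> e\<close> assms by (simp add: divide_le_eq mult.commute mult_left_mono)
  then have "w \<in> A" using assms(2) by (auto simp: w_def dist_norm)
  define y where "y = (1/c) *\<^sub>R a + (1 - 1/c) *\<^sub>R w"
  have "y \<in> A"
    unfolding y_def using \<open>1 < c\<close> by (intro convexD[OF assms(1) \<open>a \<in> A\<close> \<open>w \<in> A\<close>]) auto
  moreover have "x + c *\<^sub>R (y - x) = z"
  proof -
    have "c *\<^sub>R y = a + (c - 1) *\<^sub>R w"
      using \<open>1 < c\<close> by (simp add: y_def algebra_simps)
    also have "(c - 1) *\<^sub>R w = (c - 1) *\<^sub>R x + ((c - 1) * (r / e)) *\<^sub>R b"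
      by (simp add: w_def scaleR_add_right)
    also have "(c - 1) * (r / e) = 1"
      using assms by (simp add: c_def)
    finally show ?thesis by (simp add: z algebra_simps)
  qed
  ultimately show "z \<in> (\<lambda>y. x + (1 + e/r) *\<^sub>R (y - x)) ` A" by (auto simp: c_def)
qed

lemma inradius_pos:
  fixes A :: "'a::euclidean_space set"
  assumes "bounded A" and "interior A \<noteq> {}"
  shows "0 < inradius A"
proof -
  from assms(2) obtain x where "x \<in> interior A" by auto
  then obtain e where "0 < e" and "ball x e \<subseteq> A" by (meson mem_interior)
  have "cball x (e/2) \<subseteq> ball x e"
    using \<open>0 < e\<close> by (simp add: cball_subset_ball_iff)
  with \<open>ball x e \<subseteq> A\<close> have ball_in: "cball x (e/2) \<subseteq> A" by (rule subset_trans[rotated])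
  obtain R c where R: "A \<subseteq> cball c R"
    using bounded_subset_cball[THEN iffD1, OF assms(1)] by blast
  have "bdd_above {r. 0 < r \<and> (\<exists>x\<in>A. cball x r \<subseteq> A)}"
  proof (rule bdd_aboveI)
    fix r assume "r \<in> {r. 0 < r \<and> (\<exists>x\<in>A. cball x r \<subseteq> A)}"
    then obtain y where "0 < r" "cball y r \<subseteq> cball c R" using R by blast
    then show "r \<le> R"
      unfolding cball_subset_cball_iff using zero_le_dist[of y c] by linarith
  qed
  moreover have "x \<in> A" using ball_in \<open>0 < e\<close> by auto
  ultimately have "e/2 \<le> inradius A"
    unfolding inradius_def using \<open>0 < e\<close> ball_in by (intro cSup_upper) auto
  with \<open>0 < e\<close> show ?thesis by linarith
qed

lemma finite_measure_density_integrable: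
  fixes f :: "'a \<Rightarrow> real"
  assumes "integrable M f"
  shows "finite_measure (density M f)"
proof
  have "emeasure (density M f) (space (density M f)) = (\<integral>\<^sup>+x. ennreal (f x) \<partial>M)"
    using assms by (simp add: emeasure_density)
  also have "\<dots> \<le> (\<integral>\<^sup>+x. ennreal (norm (f x)) \<partial>M)"
    by (intro nn_integral_mono ennreal_leI) simp
  also have "\<dots> < \<infinity>"
    using assms by (simp add: integrable_iff_bounded)
  finally show "emeasure (density M f) (space (density M f)) \<noteq> \<infinity>" by simp
qed

lemma measure_enlarge_diff_le:
  fixes f :: "'a::euclidean_space \<Rightarrow> real"
  assumes lc: "log_concave f" and [measurable]: "f \<in> borel_measurable borel"
    and "finite_measure (density lborel f)"
    and "convex A" and "compact A" and "cball x r \<subseteq> A" and "0 < r"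
    and "0 < f x" and M: "\<And>y. y \<in> A \<Longrightarrow> f y \<le> M" and "0 < e"
  shows "measure (density lborel f) (enlarge A e - A)
    \<le> measure (density lborel f) A * ((1 + e/r) ^ DIM('a) * (M / f x) powr (e/r) - 1)"
proof -
  let ?\<mu> = "density lborel f"
  interpret finite_measure ?\<mu> by fact
  define c where "c = 1 + e/r"
  define T where "T y = x + c *\<^sub>R (y - x)" for y
  have "1 < c" using \<open>0 < e\<close> \<open>0 < r\<close> by (simp add: c_def)
  have A[measurable]: "A \<in> sets borel"
    using \<open>compact A\<close> by (simp add: borel_compact)
  have "T ` A \<in> sets borel"
    unfolding T_def[abs_def] using \<open>1 < c\<close> by (intro sets_borel_homothety_image A) auto
  have "enlarge A e \<subseteq> T ` A"
    unfolding T_def[abs_def] c_def using assms by (intro enlarge_subset_homothety)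
  have "A \<subseteq> enlarge A e"
    unfolding enlarge_def using \<open>0 < e\<close> by force
  have "emeasure ?\<mu> (T ` A) \<le> ennreal (c ^ DIM('a) * (M / f x) powr (c - 1)) * emeasure ?\<mu> A"
    unfolding T_def[abs_def] using \<open>1 < c\<close>
    by (intro emeasure_density_homothety_le log_concave_nonneg[OF lc] A)
      (auto simp: mult.commute intro: log_concave_homothety_le[OF lc _ \<open>0 < f x\<close> M])
  then have image: "measure ?\<mu> (T ` A) \<le> c ^ DIM('a) * (M / f x) powr (c - 1) * measure ?\<mu> A"
    using \<open>1 < c\<close> by (simp add: emeasure_eq_measure ennreal_mult[symmetric])
  have "measure ?\<mu> (enlarge A e - A) \<le> measure ?\<mu> (T ` A - A)"
    using \<open>enlarge A e \<subseteq> T ` A\<close> \<open>T ` A \<in> sets borel\<close> by (intro finite_measure_mono) auto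
  also have "\<dots> = measure ?\<mu> (T ` A) - measure ?\<mu> A"
    using \<open>enlarge A e \<subseteq> T ` A\<close> \<open>A \<subseteq> enlarge A e\<close> \<open>T ` A \<in> sets borel\<close>
    by (intro finite_measure_Diff) auto
  finally show ?thesis
    using image by (simp add: c_def algebra_simps)
qed

lemma boundary_measure_le_derivative:
  assumes growth: "\<And>e. 0 < e \<Longrightarrow> measure M (enlarge A e - A) \<le> m * (\<phi> e - \<phi> 0)"
    and "(\<phi> has_real_derivative L) (at_right 0)"
  shows "boundary_measure M A \<le> ereal (m * L)"
proof -
  have "((\<lambda>e. (\<phi> e - \<phi> 0) / e) \<longlongrightarrow> L) (at_right 0)"
    using assms(2) unfolding has_field_derivative_iff by simp
  then have lim: "((\<lambda>e. ereal (m * ((\<phi> e - \<phi> 0) / e))) \<longlongrightarrow> ereal (m * L)) (at_right 0)"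
    by (intro lim_ereal[THEN iffD2] tendsto_mult_left)
  have "eventually (\<lambda>e. ereal (measure M (enlarge A e - A) / e) \<le> ereal (m * ((\<phi> e - \<phi> 0) / e))) (at_right 0)"
  proof (rule eventually_at_rightI[where b=1])
    fix e :: real assume "e \<in> {0<..<1}"
    then show "ereal (measure M (enlarge A e - A) / e) \<le> ereal (m * ((\<phi> e - \<phi> 0) / e))"
      using growth[of e] by (simp add: divide_right_mono)
  qed simp
  then have "boundary_measure M A \<le> Liminf (at_right 0) (\<lambda>e. ereal (m * ((\<phi> e - \<phi> 0) / e)))"
    unfolding boundary_measure_def by (rule Liminf_mono)
  also have "\<dots> = ereal (m * L)"
    using lim by (intro lim_imp_Liminf) simp_all
  finally show ?thesis .
qed

theorem lemma4p4:
  fixes f :: "'a::euclidean_space \<Rightarrow> real" and A :: "'a set" and xA :: 'a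
  assumes "centered_log_concave_density f"
    and "convex_body A"
    and "xA \<in> A" and "cball xA (inradius A) \<subseteq> A"
  shows "boundary_measure (density lborel f) A \<le>
     (if f xA = 0 then \<infinity>
      else ereal ((real DIM('a) + ln (Sup (f ` A) / f xA)) / inradius A
                  * measure (density lborel f) A))"
proof (cases "f xA = 0")
  case True
  then show ?thesis by simp
next
  case False
  let ?\<mu> = "density lborel f"
  define r where "r = inradius A"
  define K where "K = Sup (f ` A) / f xA"
  define \<phi> where "\<phi> e = (1 + e/r) ^ DIM('a) * K powr (e/r)" for e
  have lc: "log_concave f" and fm: "f \<in> borel_measurable borel" and fi: "integrable lborel f"
    and "integral\<^sup>L lborel f = 1"
    using assms(1) by (auto simp: centered_log_concave_density_def)
  then obtain B where "\<forall>x. f x \<le> B"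
    using log_concave_integrable_bounded by fastforce
  then have M: "\<And>y. y \<in> A \<Longrightarrow> f y \<le> Sup (f ` A)"
    by (intro cSup_upper bdd_aboveI) auto
  have "0 < f xA" using False log_concave_nonneg[OF lc, of xA] by simp
  have "compact A" "convex A" "interior A \<noteq> {}"
    using assms(2) by (auto simp: convex_body_def)
  then have "0 < r" by (simp add: r_def compact_imp_bounded inradius_pos)
  have inball: "cball xA r \<subseteq> A" using assms(4) by (simp add: r_def)
  have "0 < K" using M[OF assms(3)] \<open>0 < f xA\<close> by (simp add: K_def)
  have deriv: "(\<phi> has_real_derivative (real DIM('a) + ln K) / r) (at 0)"
    unfolding \<phi>_def using \<open>0 < K\<close> \<open>0 < r\<close>
    by (auto intro!: derivative_eq_intros simp: add_divide_distrib)
  have growth: "measure ?\<mu> (enlarge A e - A) \<le> measure ?\<mu> A * (\<phi> e - \<phi> 0)" if "0 < e" for e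
  proof -
    have "\<phi> 0 = 1" using \<open>0 < K\<close> by (simp add: \<phi>_def)
    then show ?thesis
      using measure_enlarge_diff_le[OF lc fm finite_measure_density_integrable[OF fi]
          \<open>convex A\<close> \<open>compact A\<close> inball \<open>0 < r\<close> \<open>0 < f xA\<close> M that]
      by (simp add: \<phi>_def K_def)
  qed
  have "boundary_measure ?\<mu> A \<le> ereal (measure ?\<mu> A * ((real DIM('a) + ln K) / r))"
    by (rule boundary_measure_le_derivative[OF growth has_field_derivative_at_within[OF deriv]])
  then show ?thesis using False by (simp add: K_def r_def mult.commute)
qed

end
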